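(* Let $\mathbf R=\{R_i,t_i\}_{i\ge0}$ be a purely inseparable tower arising from a pair $(R,I_0)$ such that every $i$-th Frobenius projection $F_i\colon R_{i+1}/I_0R_{i+1}\to R_i/I_0R_i$ is surjective. Then the induced tower of $\mathbb F_p$-algebras $(R_0/I_0)_{\mathrm{red}}\to(R_1/I_0R_1)_{\mathrm{red}}\to\cdots\to(R_i/I_0R_i)_{\mathrm{red}}\to\cdots$ (transition maps induced by the $t_i$) is a perfect tower.
   Context: Fix a prime $p$; rings are commutative with $1$; $\varphi$ is absolute Frobenius. A tower of rings $\{R_i,t_i\}_{i\ge0}$ is a sequence of ring maps $R_0\xrightarrow{t_0}R_1\to\cdots$. For a ring $R$ and ideal $I_0$, write $\overline{R_i}=R_i/I_0R_i$ and $\overline{t_i}$ for induced maps. A purely inseparable tower arising from $(R,I_0)$ is a tower with (a) $R_0=R$, $p\in I_0$; (b) each $\overline{t_i}$ injective; (c) $\varphi(\overline{R_{i+1}})\subset\overline{t_i}(\overline{R_i})$; the $i$-th Frobenius projection $F_i\colon\overline{R_{i+1}}\to\overline{R_i}$ is the unique ring map with $\overline{t_i}\circ F_i=\varphi$. A perfect tower is a tower isomorphic (as an inductive system of rings) to $A\xrightarrow{\varphi}A\xrightarrow{\varphi}\cdots$ for a reduced $\mathbb F_p$-algebra $A$. *)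

theory Defs
  imports "HOL-Algebra.Algebra"
begin

definition frob :: "('a, 'm) ring_scheme \<Rightarrow> nat \<Rightarrow> 'a \<Rightarrow> 'a" where
  "frob A p x = x [^]\<^bsub>A\<^esub> p"

fun tcomp :: "(nat \<Rightarrow> 'a \<Rightarrow> 'a) \<Rightarrow> nat \<Rightarrow> 'a \<Rightarrow> 'a" where
  "tcomp t 0 = id"
| "tcomp t (Suc i) = t i \<circ> tcomp t i"

definition ext_ideal :: "(nat \<Rightarrow> 'a ring) \<Rightarrow> (nat \<Rightarrow> 'a \<Rightarrow> 'a) \<Rightarrow> 'a set \<Rightarrow> nat \<Rightarrow> 'a set" where
  "ext_ideal R t I0 i = Idl\<^bsub>R i\<^esub> (tcomp t i ` I0)"

text \<open>Map between quotient rings S_1/J \<rightarrow> S_2/K induced by f (well defined when f(J) \<subseteq> K).\<close>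
definition quot_map :: "('b, 'n) ring_scheme \<Rightarrow> 'b set \<Rightarrow> ('a \<Rightarrow> 'b) \<Rightarrow> 'a set \<Rightarrow> 'b set" where
  "quot_map S K f Y = K +>\<^bsub>S\<^esub> (f (SOME x. x \<in> Y))"

definition Rbar :: "(nat \<Rightarrow> 'a ring) \<Rightarrow> (nat \<Rightarrow> 'a \<Rightarrow> 'a) \<Rightarrow> 'a set \<Rightarrow> nat \<Rightarrow> 'a set ring" where
  "Rbar R t I0 i = R i Quot ext_ideal R t I0 i"

definition tbar :: "(nat \<Rightarrow> 'a ring) \<Rightarrow> (nat \<Rightarrow> 'a \<Rightarrow> 'a) \<Rightarrow> 'a set \<Rightarrow> nat \<Rightarrow> 'a set \<Rightarrow> 'a set" where
  "tbar R t I0 i = quot_map (R (Suc i)) (ext_ideal R t I0 (Suc i)) (t i)"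

definition tower :: "(nat \<Rightarrow> 'a ring) \<Rightarrow> (nat \<Rightarrow> 'a \<Rightarrow> 'a) \<Rightarrow> bool" where
  "tower R t \<longleftrightarrow> (\<forall>i. cring (R i) \<and> t i \<in> ring_hom (R i) (R (Suc i)))"

definition purely_insep_tower :: "nat \<Rightarrow> (nat \<Rightarrow> 'a ring) \<Rightarrow> (nat \<Rightarrow> 'a \<Rightarrow> 'a) \<Rightarrow> 'a set \<Rightarrow> bool" where
  "purely_insep_tower p R t I0 \<longleftrightarrow>
     tower R t \<and> ideal I0 (R 0) \<and> [p] \<cdot>\<^bsub>R 0\<^esub> \<one>\<^bsub>R 0\<^esub> \<in> I0 \<and>
     (\<forall>i. inj_on (tbar R t I0 i) (carrier (Rbar R t I0 i))) \<and>
     (\<forall>i. frob (Rbar R t I0 (Suc i)) p ` carrier (Rbar R t I0 (Suc i))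
            \<subseteq> tbar R t I0 i ` carrier (Rbar R t I0 i))"

definition frob_proj :: "nat \<Rightarrow> (nat \<Rightarrow> 'a ring) \<Rightarrow> (nat \<Rightarrow> 'a \<Rightarrow> 'a) \<Rightarrow> 'a set \<Rightarrow> nat \<Rightarrow> 'a set \<Rightarrow> 'a set" where
  "frob_proj p R t I0 i y =
     (THE x. x \<in> carrier (Rbar R t I0 i) \<and> tbar R t I0 i x = frob (Rbar R t I0 (Suc i)) p y)"

definition nilrad :: "('a, 'm) ring_scheme \<Rightarrow> 'a set" where
  "nilrad Q = {x \<in> carrier Q. \<exists>n::nat. x [^]\<^bsub>Q\<^esub> n = \<zero>\<^bsub>Q\<^esub>}"

definition red :: "'a ring \<Rightarrow> 'a set ring" where
  "red Q = Q Quot nilrad Q"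

definition Rred :: "(nat \<Rightarrow> 'a ring) \<Rightarrow> (nat \<Rightarrow> 'a \<Rightarrow> 'a) \<Rightarrow> 'a set \<Rightarrow> nat \<Rightarrow> 'a set set ring" where
  "Rred R t I0 i = red (Rbar R t I0 i)"

definition tred :: "(nat \<Rightarrow> 'a ring) \<Rightarrow> (nat \<Rightarrow> 'a \<Rightarrow> 'a) \<Rightarrow> 'a set \<Rightarrow> nat \<Rightarrow> 'a set set \<Rightarrow> 'a set set" where
  "tred R t I0 i = quot_map (Rbar R t I0 (Suc i)) (nilrad (Rbar R t I0 (Suc i))) (tbar R t I0 i)"

definition reduced_Fp_algebra :: "nat \<Rightarrow> 'b ring \<Rightarrow> bool" where
  "reduced_Fp_algebra p A \<longleftrightarrow> cring A \<and> [p] \<cdot>\<^bsub>A\<^esub> \<one>\<^bsub>A\<^esub> = \<zero>\<^bsub>A\<^esub> \<and>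
     (\<forall>x\<in>carrier A. \<forall>n::nat. x [^]\<^bsub>A\<^esub> n = \<zero>\<^bsub>A\<^esub> \<longrightarrow> x = \<zero>\<^bsub>A\<^esub>)"

text \<open>Perfect tower: isomorphic as an inductive system to A \<rightarrow>\<phi> A \<rightarrow>\<phi> \<dots> for a reduced
  F_p-algebra A (taken WLOG on the same element type as the tower).\<close>
definition perfect_tower :: "nat \<Rightarrow> (nat \<Rightarrow> 'b ring) \<Rightarrow> (nat \<Rightarrow> 'b \<Rightarrow> 'b) \<Rightarrow> bool" where
  "perfect_tower p S s \<longleftrightarrow>
     (\<exists>(A::'b ring) \<psi>. reduced_Fp_algebra p A \<and>
        (\<forall>i. \<psi> i \<in> ring_iso (S i) A) \<and>
        (\<forall>i. \<forall>x\<in>carrier (S i). \<psi> (Suc i) (s i x) = frob A p (\<psi> i x)))"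

end

theory Submission
  imports Defs
begin

text \<open>
  Write Q_i = R_i / I_0 R_i. As p = 0 in Q_i, the Frobenius of Q_i is a ring endomorphism;
  reading it through the injective induced map t_i shows that the Frobenius projection F_i is a ring
  homomorphism, surjective by hypothesis. Since t_i (F_i w) = w^p, F_i w is nilpotent only if
  w is, so F_i induces isomorphisms G_i : (Q_(i+1))_red -> (Q_i)_red, and G_i composed with the
  reduced transition map is the Frobenius of (Q_i)_red because F_i (t_i x) = x^p. The
  composites G_0 o ... o G_(i-1) therefore identify the reduced tower with A -> A -> ...,
  A = (Q_0)_red, all maps being the Frobenius.
\<close>

section \<open>The Frobenius in characteristic p\<close>

lemma (in cring) binomial_expansion:
  assumes a: "a \<in> carrier R" and b: "b \<in> carrier R"
  shows "(a \<oplus> b) [^] n = (\<Oplus>k\<in>{..n}. [(n choose k)] \<cdot> (a [^] k \<otimes> b [^] (n - k)))"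
proof (induction n)
  case 0
  then show ?case using a b by simp
next
  case (Suc n)
  define S where "S = (\<Oplus>k\<in>{..n}. [(n choose k)] \<cdot> (a [^] k \<otimes> b [^] (n - k)))"
  define g where "g k = [(n choose k)] \<cdot> (a [^] k \<otimes> b [^] (Suc n - k))" for k
  define h where "h k = [(Suc n choose k)] \<cdot> (a [^] k \<otimes> b [^] (Suc n - k))" for k
  have S: "S \<in> carrier R" unfolding S_def using a b by (intro finsum_closed) auto
  have g: "g \<in> {..Suc n} \<rightarrow> carrier R" and h: "h \<in> {..Suc n} \<rightarrow> carrier R"
    unfolding g_def h_def using a b by auto
  have aS: "a \<otimes> S = (\<Oplus>k\<in>{..n}. [(n choose k)] \<cdot> (a [^] Suc k \<otimes> b [^] (n - k)))"
    unfolding S_def using a b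
    by (subst finsum_rdistr) (auto intro!: finsum_cong' simp: add_pow_rdistr m_assoc[symmetric] m_comm[of a])
  have "b \<otimes> S = (\<Oplus>k\<in>{..n}. g k)"
    unfolding S_def g_def using a b
    by (subst finsum_rdistr) (auto intro!: finsum_cong' simp: add_pow_rdistr m_lcomm m_comm[of _ b] Suc_diff_le)
  also have "\<dots> = (\<Oplus>k\<in>{..Suc n}. g k)"
    using finsum_Suc[OF g] g by (simp add: g_def binomial_eq_0 Pi_def finsum_closed)
  also have "\<dots> = (\<Oplus>k\<in>{..n}. g (Suc k)) \<oplus> g 0"
    by (rule finsum_Suc2[OF g])
  finally have bS: "b \<otimes> S = (\<Oplus>k\<in>{..n}. [(n choose Suc k)] \<cdot> (a [^] Suc k \<otimes> b [^] (n - k))) \<oplus> b [^] Suc n"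
    using b by (simp add: g_def)
  have "(\<Oplus>k\<in>{..Suc n}. h k) = (\<Oplus>k\<in>{..n}. h (Suc k)) \<oplus> h 0"
    by (rule finsum_Suc2[OF h])
  also have "h 0 = b [^] Suc n" unfolding h_def using b by simp
  also have "(\<Oplus>k\<in>{..n}. h (Suc k)) = (\<Oplus>k\<in>{..n}. [(n choose k)] \<cdot> (a [^] Suc k \<otimes> b [^] (n - k))
      \<oplus> [(n choose Suc k)] \<cdot> (a [^] Suc k \<otimes> b [^] (n - k)))"
    unfolding h_def using a b by (intro finsum_cong') (auto simp: add.nat_pow_mult)
  also have "\<dots> = a \<otimes> S \<oplus> (\<Oplus>k\<in>{..n}. [(n choose Suc k)] \<cdot> (a [^] Suc k \<otimes> b [^] (n - k)))"
    unfolding aS using a b by (subst finsum_addf) auto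
  finally have "(\<Oplus>k\<in>{..Suc n}. h k) = a \<otimes> S \<oplus> b \<otimes> S"
    unfolding bS using a b S by (simp add: a_assoc finsum_closed)
  also have "\<dots> = (a \<oplus> b) [^] Suc n"
    using Suc.IH a b S by (simp add: S_def[symmetric] r_distr m_comm)
  finally show ?case by (simp add: h_def)
qed

lemma (in ring) add_pow_eq_zero_if_char_dvd:
  assumes char: "[(p::nat)] \<cdot> \<one> = \<zero>" and x: "x \<in> carrier R" and "p dvd m"
  shows "[m] \<cdot> x = \<zero>"
proof -
  obtain q where m: "m = p * q" using \<open>p dvd m\<close> by blast
  have "[p] \<cdot> x = \<zero>" using add_pow_ldistr[of \<one> x p] x char by simp
  then show ?thesis using x m add.nat_pow_pow[of x q p] by simp
qed

lemma (in cring) freshman_dream: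
  assumes p: "Factorial_Ring.prime (p::nat)" and char: "[p] \<cdot> \<one> = \<zero>"
    and a: "a \<in> carrier R" and b: "b \<in> carrier R"
  shows "(a \<oplus> b) [^] p = a [^] p \<oplus> b [^] p"
proof -
  define f where "f k = [(p choose k)] \<cdot> (a [^] k \<otimes> b [^] (p - k))" for k
  have f_closed: "f k \<in> carrier R" for k unfolding f_def using a b by auto
  have "p > 0" using p prime_gt_0_nat by blast
  then have split: "{..p} = insert p (insert 0 {1..<p})" by auto
  have middle: "(\<Oplus>k\<in>{1..<p}. f k) = \<zero>"
  proof -
    have "(\<Oplus>k\<in>{1..<p}. f k) = (\<Oplus>k\<in>{1..<p}. \<zero>)"
      unfolding f_def using a b
      by (intro finsum_cong') (auto intro!: add_pow_eq_zero_if_char_dvd[OF char] dvd_choose_prime p)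
    then show ?thesis by simp
  qed
  have "(a \<oplus> b) [^] p = (\<Oplus>k\<in>{..p}. f k)" unfolding f_def by (rule binomial_expansion[OF a b])
  also have "\<dots> = f p \<oplus> (f 0 \<oplus> (\<Oplus>k\<in>{1..<p}. f k))"
    unfolding split using \<open>p > 0\<close> by (simp add: finsum_insert f_closed)
  also have "\<dots> = a [^] p \<oplus> b [^] p"
    unfolding middle by (simp add: f_def a b)
  finally show ?thesis .
qed

lemma frob_ring_hom:
  assumes "cring R" and "Factorial_Ring.prime (p::nat)" and "[p] \<cdot>\<^bsub>R\<^esub> \<one>\<^bsub>R\<^esub> = \<zero>\<^bsub>R\<^esub>"
  shows "frob R p \<in> ring_hom R R"
proof -
  interpret cring R by fact
  show ?thesis
    by (rule ring_hom_memI) (simp_all add: frob_def nat_pow_distrib freshman_dream[OF assms(2,3)])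
qed

lemma ring_hom_factor_through_inj:
  assumes "ring A" and "ring B" and \<tau>: "\<tau> \<in> ring_hom A C" and inj: "inj_on \<tau> (carrier A)"
    and f: "f \<in> ring_hom B C"
    and g: "\<And>y. y \<in> carrier B \<Longrightarrow> g y \<in> carrier A \<and> \<tau> (g y) = f y"
  shows "g \<in> ring_hom B A"
proof -
  interpret A: ring A by fact
  interpret B: ring B by fact
  have eq: "g y = x" if "y \<in> carrier B" "x \<in> carrier A" "\<tau> x = f y" for x y
    using inj_onD[OF inj, of "g y" x] g that by auto
  show ?thesis
  proof (rule ring_hom_memI)
    fix y z assume y: "y \<in> carrier B" and z: "z \<in> carrier B"
    show "g (y \<otimes>\<^bsub>B\<^esub> z) = g y \<otimes>\<^bsub>A\<^esub> g z"
      by (rule eq) (use y z g \<tau> f in \<open>auto simp: ring_hom_mult\<close>)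
    show "g (y \<oplus>\<^bsub>B\<^esub> z) = g y \<oplus>\<^bsub>A\<^esub> g z"
      by (rule eq) (use y z g \<tau> f in \<open>auto simp: ring_hom_add\<close>)
  next
    show "g \<one>\<^bsub>B\<^esub> = \<one>\<^bsub>A\<^esub>"
      by (rule eq) (use \<tau> f in \<open>auto simp: ring_hom_one\<close>)
  qed (use g in blast)
qed

section \<open>Maps induced on quotient rings\<close>

lemma FactRing_carrier: "carrier (R Quot I) = (+>\<^bsub>R\<^esub>) I ` carrier R"
  by (auto simp: FactRing_def A_RCOSETS_def' a_r_coset_def)

lemma ring_hom_add_pow:
  assumes "h \<in> ring_hom R S" and "ring R" and "ring S" and "x \<in> carrier R"
  shows "h ([(n::nat)] \<cdot>\<^bsub>R\<^esub> x) = [n] \<cdot>\<^bsub>S\<^esub> h x"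
proof -
  interpret ring_hom_ring R S h using assms by (intro ring_hom_ringI2) auto
  show ?thesis by (induction n) (auto simp: \<open>x \<in> carrier R\<close>)
qed

lemma (in ideal) quotient_char:
  assumes "[(n::nat)] \<cdot> \<one> \<in> I"
  shows "[n] \<cdot>\<^bsub>R Quot I\<^esub> \<one>\<^bsub>R Quot I\<^esub> = \<zero>\<^bsub>R Quot I\<^esub>"
proof -
  have "[n] \<cdot>\<^bsub>R Quot I\<^esub> \<one>\<^bsub>R Quot I\<^esub> = I +> ([n] \<cdot> \<one>)"
    using ring_hom_add_pow[OF rcos_ring_hom ring_axioms quotient_is_ring, of \<one> n]
    by (simp add: FactRing_def)
  also have "\<dots> = \<zero>\<^bsub>R Quot I\<^esub>" using assms by (simp add: FactRing_def a_rcos_const)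
  finally show ?thesis .
qed

lemma quot_map_coset:
  assumes "ring R" and "ring S" and I: "ideal I R" and K: "ideal K S"
    and f: "f \<in> ring_hom R S" and fI: "f ` I \<subseteq> K" and a: "a \<in> carrier R"
  shows "quot_map S K f (I +>\<^bsub>R\<^esub> a) = K +>\<^bsub>S\<^esub> f a"
proof -
  interpret I: ideal I R by fact
  interpret K: ideal K S by fact
  have "\<exists>x. x \<in> I +>\<^bsub>R\<^esub> a" using I.a_rcos_self[OF a] by blast
  then have "(SOME x. x \<in> I +>\<^bsub>R\<^esub> a) \<in> I +>\<^bsub>R\<^esub> a" by (rule someI_ex)
  then obtain i where i: "i \<in> I" and some_eq: "(SOME x. x \<in> I +>\<^bsub>R\<^esub> a) = i \<oplus>\<^bsub>R\<^esub> a"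
    unfolding a_r_coset_def' by blast
  have "f (i \<oplus>\<^bsub>R\<^esub> a) = f i \<oplus>\<^bsub>S\<^esub> f a" using ring_hom_add[OF f _ a] i I.Icarr by blast
  moreover have "f i \<in> K" using fI i by blast
  ultimately have "f (i \<oplus>\<^bsub>R\<^esub> a) \<in> K +>\<^bsub>S\<^esub> f a" unfolding a_r_coset_def' by blast
  then show ?thesis
    unfolding quot_map_def some_eq by (rule K.a_repr_independence'[OF _ ring_hom_closed[OF f a], symmetric])
qed

lemma quot_map_ring_hom:
  assumes R: "ring R" and S: "ring S" and I: "ideal I R" and K: "ideal K S"
    and f: "f \<in> ring_hom R S" and fI: "f ` I \<subseteq> K"
  shows "quot_map S K f \<in> ring_hom (R Quot I) (S Quot K)"
proof -
  interpret I: ideal I R by fact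
  interpret K: ideal K S by fact
  note coset = quot_map_coset[OF R S I K f fI]
  show ?thesis
  proof (rule ring_hom_memI)
    fix u assume "u \<in> carrier (R Quot I)"
    then obtain a where "a \<in> carrier R" "u = I +>\<^bsub>R\<^esub> a" by (auto simp: FactRing_carrier)
    then show "quot_map S K f u \<in> carrier (S Quot K)"
      using coset ring_hom_closed[OF f] by (auto simp: FactRing_carrier)
  next
    fix u v assume "u \<in> carrier (R Quot I)" "v \<in> carrier (R Quot I)"
    then obtain a b where a: "a \<in> carrier R" "u = I +>\<^bsub>R\<^esub> a" and b: "b \<in> carrier R" "v = I +>\<^bsub>R\<^esub> b"
      by (auto simp: FactRing_carrier)
    show "quot_map S K f (u \<otimes>\<^bsub>R Quot I\<^esub> v) = quot_map S K f u \<otimes>\<^bsub>S Quot K\<^esub> quot_map S K f v"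
      using a b f by (simp add: FactRing_def I.rcoset_mult_add K.rcoset_mult_add coset ring_hom_closed ring_hom_mult)
    show "quot_map S K f (u \<oplus>\<^bsub>R Quot I\<^esub> v) = quot_map S K f u \<oplus>\<^bsub>S Quot K\<^esub> quot_map S K f v"
      using a b f by (simp add: FactRing_def I.a_rcos_sum K.a_rcos_sum coset ring_hom_closed ring_hom_add)
  next
    show "quot_map S K f \<one>\<^bsub>R Quot I\<^esub> = \<one>\<^bsub>S Quot K\<^esub>"
      using f by (simp add: FactRing_def coset ring_hom_one)
  qed
qed

lemma quot_map_ring_iso:
  assumes R: "ring R" and S: "ring S" and I: "ideal I R" and K: "ideal K S"
    and f: "f \<in> ring_hom R S" and fI: "f ` I \<subseteq> K"
    and surj: "f ` carrier R = carrier S" and reflect: "\<And>x. x \<in> carrier R \<Longrightarrow> f x \<in> K \<Longrightarrow> x \<in> I"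
  shows "quot_map S K f \<in> ring_iso (R Quot I) (S Quot K)"
proof -
  interpret R: ring R by fact
  interpret S: ring S by fact
  interpret f: ring_hom_ring R S f by (rule ring_hom_ringI2) fact+
  note hom = quot_map_ring_hom[OF R S I K f fI]
  note coset = quot_map_coset[OF R S I K f fI]
  have "inj_on (quot_map S K f) (carrier (R Quot I))"
  proof (rule inj_onI)
    fix u v assume "u \<in> carrier (R Quot I)" "v \<in> carrier (R Quot I)"
      and eq: "quot_map S K f u = quot_map S K f v"
    then obtain a b where a: "a \<in> carrier R" "u = I +>\<^bsub>R\<^esub> a" and b: "b \<in> carrier R" "v = I +>\<^bsub>R\<^esub> b"
      by (auto simp: FactRing_carrier)
    have "f a \<ominus>\<^bsub>S\<^esub> f b \<in> K"
      using eq a b coset S.quotient_eq_iff_same_a_r_cos[OF K] by simp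
    then have "f (a \<ominus>\<^bsub>R\<^esub> b) \<in> K" using a b by (simp add: a_minus_def f.hom_a_inv)
    then have "a \<ominus>\<^bsub>R\<^esub> b \<in> I" using reflect a b by simp
    then show "u = v" using a b R.quotient_eq_iff_same_a_r_cos[OF I] by simp
  qed
  moreover have "carrier (S Quot K) \<subseteq> quot_map S K f ` carrier (R Quot I)"
  proof
    fix v assume "v \<in> carrier (S Quot K)"
    then obtain a where "a \<in> carrier R" "v = K +>\<^bsub>S\<^esub> f a"
      using surj unfolding FactRing_carrier by (metis imageE)
    then show "v \<in> quot_map S K f ` carrier (R Quot I)"
      using coset by (auto simp: FactRing_carrier)
  qed
  moreover have "quot_map S K f ` carrier (R Quot I) \<subseteq> carrier (S Quot K)"
    using ring_hom_closed[OF hom] by blast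
  ultimately show ?thesis using hom unfolding ring_iso_def bij_betw_def by auto
qed

lemma quot_map_comp_frob:
  assumes R: "ring R" and S: "ring S" and I: "ideal I R" and K: "ideal K S"
    and f: "f \<in> ring_hom R S" and fI: "f ` I \<subseteq> K" and g: "g \<in> ring_hom S R" and gK: "g ` K \<subseteq> I"
    and gf: "\<And>a. a \<in> carrier R \<Longrightarrow> g (f a) = a [^]\<^bsub>R\<^esub> (p::nat)"
    and u: "u \<in> carrier (R Quot I)"
  shows "quot_map R I g (quot_map S K f u) = frob (R Quot I) p u"
proof -
  interpret I: ideal I R by fact
  interpret \<pi>: ring_hom_ring R "R Quot I" "(+>\<^bsub>R\<^esub>) I" by (rule I.rcos_ring_hom_ring)
  obtain a where a: "a \<in> carrier R" and u_eq: "u = I +>\<^bsub>R\<^esub> a"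
    using u by (auto simp: FactRing_carrier)
  have "quot_map R I g (quot_map S K f u) = I +>\<^bsub>R\<^esub> (a [^]\<^bsub>R\<^esub> p)"
    using a ring_hom_closed[OF f a]
    by (simp add: u_eq quot_map_coset[OF R S I K f fI] quot_map_coset[OF S R K I g gK] gf)
  also have "\<dots> = frob (R Quot I) p u"
    unfolding u_eq frob_def by (rule \<pi>.hom_nat_pow[OF a])
  finally show ?thesis .
qed

section \<open>The nilradical\<close>

lemma (in cring) nilrad_ideal: "ideal (nilrad R) R"
proof -
  have pow_zero_mono: "x [^] m = \<zero>" if "x \<in> carrier R" "x [^] (n::nat) = \<zero>" "n \<le> m" for x n m
    using that nat_pow_mult[of x n "m - n"] by simp
  have add: "x \<oplus> y \<in> nilrad R" if x_nil: "x \<in> nilrad R" and y_nil: "y \<in> nilrad R" for x y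
  proof -
    obtain n where x: "x \<in> carrier R" "x [^] (n::nat) = \<zero>" using x_nil unfolding nilrad_def by blast
    obtain m where y: "y \<in> carrier R" "y [^] (m::nat) = \<zero>" using y_nil unfolding nilrad_def by blast
    \<comment> \<open>every term of the binomial expansion of \<open>(x \<oplus> y) [^] (n + m)\<close> contains \<open>x [^] n\<close> or \<open>y [^] m\<close>\<close>
    have "x [^] k \<otimes> y [^] (n + m - k) = \<zero>" for k
      by (cases "n \<le> k") (use x y pow_zero_mono[OF x] pow_zero_mono[OF y] in auto)
    then have "(x \<oplus> y) [^] (n + m) = \<zero>"
      using x y by (simp add: binomial_expansion)
    then show ?thesis unfolding nilrad_def using x y by auto
  qed
  have mult: "r \<otimes> x \<in> nilrad R" if x_nil: "x \<in> nilrad R" and "r \<in> carrier R" for x r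
  proof -
    obtain n where x: "x \<in> carrier R" "x [^] (n::nat) = \<zero>" using x_nil unfolding nilrad_def by blast
    then have "(r \<otimes> x) [^] n = \<zero>" using \<open>r \<in> carrier R\<close> by (simp add: nat_pow_distrib)
    then show ?thesis unfolding nilrad_def using x \<open>r \<in> carrier R\<close> by auto
  qed
  have "\<ominus> x \<in> nilrad R" if "x \<in> nilrad R" for x
    using mult[OF that, of "\<ominus> \<one>"] that by (simp add: nilrad_def l_minus)
  moreover have "\<zero> \<in> nilrad R" unfolding nilrad_def by (auto intro!: exI[of _ 1])
  ultimately show ?thesis
    by (intro idealI ring_axioms add.subgroupI)
       (use add mult m_comm in \<open>auto simp: nilrad_def a_inv_def[symmetric]\<close>)
qed

lemma nilrad_ring_hom_image:
  assumes "ring R" and "ring S" and h: "h \<in> ring_hom R S"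
  shows "h ` nilrad R \<subseteq> nilrad S"
proof
  interpret ring_hom_ring R S h by (rule ring_hom_ringI2) fact+
  fix y assume "y \<in> h ` nilrad R"
  then obtain x n where x: "x \<in> carrier R" "x [^]\<^bsub>R\<^esub> (n::nat) = \<zero>\<^bsub>R\<^esub>" and y: "y = h x"
    unfolding nilrad_def by blast
  then have "y [^]\<^bsub>S\<^esub> n = \<zero>\<^bsub>S\<^esub>" using hom_nat_pow[OF x(1), of n] by simp
  then show "y \<in> nilrad S" unfolding nilrad_def using x(1) y by auto
qed

lemma red_reduced_Fp_algebra:
  assumes "cring Q" and char: "[(p::nat)] \<cdot>\<^bsub>Q\<^esub> \<one>\<^bsub>Q\<^esub> = \<zero>\<^bsub>Q\<^esub>"
  shows "reduced_Fp_algebra p (red Q)"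
proof -
  interpret Q: cring Q by fact
  interpret N: ideal "nilrad Q" Q by (rule Q.nilrad_ideal)
  interpret \<pi>: ring_hom_ring Q "red Q" "(+>\<^bsub>Q\<^esub>) (nilrad Q)"
    unfolding red_def by (rule N.rcos_ring_hom_ring)
  have "\<zero>\<^bsub>Q\<^esub> \<in> nilrad Q" by (rule N.additive_subgroup_axioms[THEN additive_subgroup.zero_closed])
  then have "[p] \<cdot>\<^bsub>red Q\<^esub> \<one>\<^bsub>red Q\<^esub> = \<zero>\<^bsub>red Q\<^esub>"
    unfolding red_def by (intro N.quotient_char) (simp add: char)
  moreover have "x = \<zero>\<^bsub>red Q\<^esub>"
    if x: "x \<in> carrier (red Q)" and nil: "x [^]\<^bsub>red Q\<^esub> (n::nat) = \<zero>\<^bsub>red Q\<^esub>" for x n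
  proof -
    obtain a where a: "a \<in> carrier Q" and x_eq: "x = nilrad Q +>\<^bsub>Q\<^esub> a"
      using x unfolding red_def FactRing_carrier by blast
    have "nilrad Q +>\<^bsub>Q\<^esub> (a [^]\<^bsub>Q\<^esub> n) = x [^]\<^bsub>red Q\<^esub> n"
      unfolding x_eq by (rule \<pi>.hom_nat_pow[OF a])
    also have "\<dots> = nilrad Q" using nil by (simp only: red_def FactRing_def ring.simps)
    finally have "nilrad Q +>\<^bsub>Q\<^esub> (a [^]\<^bsub>Q\<^esub> n) = nilrad Q" .
    then have "a [^]\<^bsub>Q\<^esub> n \<in> nilrad Q" using N.rcos_const_imp_mem a by simp
    then obtain m where "(a [^]\<^bsub>Q\<^esub> n) [^]\<^bsub>Q\<^esub> (m::nat) = \<zero>\<^bsub>Q\<^esub>" unfolding nilrad_def by blast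
    then have "a \<in> nilrad Q" unfolding nilrad_def using a by (auto simp: Q.nat_pow_pow)
    then show ?thesis unfolding x_eq red_def by (simp add: FactRing_def N.a_rcos_const)
  qed
  moreover have "cring (red Q)" unfolding red_def by (rule N.quotient_is_cring[OF Q.is_cring])
  ultimately show ?thesis unfolding reduced_Fp_algebra_def by blast
qed

section \<open>Perfect towers\<close>

primrec compose_chain :: "(nat \<Rightarrow> 'a \<Rightarrow> 'a) \<Rightarrow> nat \<Rightarrow> 'a \<Rightarrow> 'a" where
  "compose_chain G 0 = id"
| "compose_chain G (Suc i) = compose_chain G i \<circ> G i"

lemma compose_chain_ring_iso:
  assumes "\<And>i. G i \<in> ring_iso (S (Suc i)) (S i)"
  shows "compose_chain G i \<in> ring_iso (S i) (S 0)"
proof (induction i)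
  case 0
  show ?case unfolding compose_chain.simps by (rule ring_iso_set_refl)
next
  case (Suc i)
  show ?case unfolding compose_chain.simps by (rule ring_iso_set_trans[OF assms Suc.IH])
qed

lemma perfect_towerI:
  assumes reduced: "reduced_Fp_algebra p (S 0)" and ring: "\<And>i. ring (S i)"
    and iso: "\<And>i. G i \<in> ring_iso (S (Suc i)) (S i)"
    and frob: "\<And>i x. x \<in> carrier (S i) \<Longrightarrow> G i (s i x) = frob (S i) p x"
  shows "perfect_tower p S s"
proof -
  define \<psi> where "\<psi> = compose_chain G"
  have \<psi>_iso: "\<psi> i \<in> ring_iso (S i) (S 0)" for i
    unfolding \<psi>_def by (rule compose_chain_ring_iso) (rule iso)
  have "\<psi> (Suc i) (s i x) = frob (S 0) p (\<psi> i x)" if x: "x \<in> carrier (S i)" for i x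
  proof -
    interpret \<psi>: ring_hom_ring "S i" "S 0" "\<psi> i"
      using ring \<psi>_iso[of i] by (intro ring_hom_ringI2) (auto simp: ring_iso_def)
    have "\<psi> (Suc i) (s i x) = \<psi> i (frob (S i) p x)" by (simp add: \<psi>_def frob[OF x])
    then show ?thesis unfolding frob_def using \<psi>.hom_nat_pow[OF x] by simp
  qed
  then show ?thesis unfolding perfect_tower_def using reduced \<psi>_iso by blast
qed

section \<open>Purely inseparable towers\<close>

lemma tcomp_ring_hom:
  assumes "tower R t"
  shows "tcomp t i \<in> ring_hom (R 0) (R i)"
proof (induction i)
  case 0
  then show ?case using ring_iso_set_refl[of "R 0"] by (simp add: ring_iso_def id_def)
next
  case (Suc i)
  show ?case
    unfolding tcomp.simps by (rule ring_hom_trans[OF Suc]) (use assms in \<open>simp add: tower_def\<close>)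
qed

lemma tcomp_image_subset:
  assumes "tower R t" and "ideal I0 (R 0)"
  shows "tcomp t i ` I0 \<subseteq> carrier (R i)"
  using ring_hom_closed[OF tcomp_ring_hom[OF assms(1)]] ideal.Icarr[OF assms(2)] by blast

lemma ext_ideal_ideal:
  assumes "tower R t" and "ideal I0 (R 0)"
  shows "ideal (ext_ideal R t I0 i) (R i)"
  unfolding ext_ideal_def
  by (rule ring.genideal_ideal[OF _ tcomp_image_subset[OF assms]])
     (use assms(1) in \<open>simp add: tower_def cring.axioms(1)\<close>)

lemma ext_ideal_image_subset:
  assumes "tower R t" and "ideal I0 (R 0)"
  shows "t i ` ext_ideal R t I0 i \<subseteq> ext_ideal R t I0 (Suc i)"
proof -
  have "ring (R i)" "ring (R (Suc i))" and t: "t i \<in> ring_hom (R i) (R (Suc i))"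
    using assms(1) by (simp_all add: tower_def cring.axioms(1))
  then interpret ring_hom_ring "R i" "R (Suc i)" "t i" by (intro ring_hom_ringI2)
  let ?V = "{r \<in> carrier (R i). t i r \<in> ext_ideal R t I0 (Suc i)}"
  have "tcomp t (Suc i) ` I0 \<subseteq> ext_ideal R t I0 (Suc i)"
    unfolding ext_ideal_def by (rule S.genideal_self[OF tcomp_image_subset[OF assms]])
  then have "tcomp t i ` I0 \<subseteq> ?V" using tcomp_image_subset[OF assms, of i] by auto
  moreover have "ideal ?V (R i)" by (rule ideal_vimage[OF ext_ideal_ideal[OF assms]])
  ultimately have "ext_ideal R t I0 i \<subseteq> ?V"
    unfolding ext_ideal_def by (rule R.genideal_minimal[rotated])
  then show ?thesis by blast
qed

lemma Rbar_cring:
  assumes "tower R t" and "ideal I0 (R 0)"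
  shows "cring (Rbar R t I0 i)"
  unfolding Rbar_def
  by (rule ideal.quotient_is_cring[OF ext_ideal_ideal[OF assms]])
     (use assms(1) in \<open>simp add: tower_def\<close>)

lemma tbar_ring_hom:
  assumes "tower R t" and "ideal I0 (R 0)"
  shows "tbar R t I0 i \<in> ring_hom (Rbar R t I0 i) (Rbar R t I0 (Suc i))"
  unfolding tbar_def Rbar_def
  by (rule quot_map_ring_hom[OF _ _ ext_ideal_ideal[OF assms] ext_ideal_ideal[OF assms] _
        ext_ideal_image_subset[OF assms]])
     (use assms(1) in \<open>simp_all add: tower_def cring.axioms(1)\<close>)

lemma Rbar_char:
  assumes "tower R t" and "ideal I0 (R 0)" and "[(p::nat)] \<cdot>\<^bsub>R 0\<^esub> \<one>\<^bsub>R 0\<^esub> \<in> I0"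
  shows "[p] \<cdot>\<^bsub>Rbar R t I0 i\<^esub> \<one>\<^bsub>Rbar R t I0 i\<^esub> = \<zero>\<^bsub>Rbar R t I0 i\<^esub>"
proof -
  have rings: "ring (R 0)" "ring (R i)" using assms(1) by (simp_all add: tower_def cring.axioms(1))
  note h = tcomp_ring_hom[OF assms(1), of i]
  have "[p] \<cdot>\<^bsub>R i\<^esub> \<one>\<^bsub>R i\<^esub> = tcomp t i ([p] \<cdot>\<^bsub>R 0\<^esub> \<one>\<^bsub>R 0\<^esub>)"
    using ring_hom_add_pow[OF h rings] ring_hom_one[OF h] ring.ring_simprules(6)[OF rings(1)] by simp
  also have "\<dots> \<in> ext_ideal R t I0 i"
    using ring.genideal_self[OF rings(2) tcomp_image_subset[OF assms(1,2)]] assms(3)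
    by (auto simp: ext_ideal_def)
  finally show ?thesis
    unfolding Rbar_def by (rule ideal.quotient_char[OF ext_ideal_ideal[OF assms(1,2)]])
qed

lemma tbar_ring_hom_ring:
  assumes "tower R t" and "ideal I0 (R 0)"
  shows "ring_hom_ring (Rbar R t I0 i) (Rbar R t I0 (Suc i)) (tbar R t I0 i)"
  using cring.axioms(1)[OF Rbar_cring[OF assms]] tbar_ring_hom[OF assms]
  by (intro ring_hom_ringI2)

lemma purely_insep_towerD:
  assumes "purely_insep_tower p R t I0"
  shows "tower R t" and "ideal I0 (R 0)" and "[p] \<cdot>\<^bsub>R 0\<^esub> \<one>\<^bsub>R 0\<^esub> \<in> I0"
    and "inj_on (tbar R t I0 i) (carrier (Rbar R t I0 i))"
  using assms unfolding purely_insep_tower_def by blast+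

lemma frob_proj_spec:
  assumes "purely_insep_tower p R t I0" and "y \<in> carrier (Rbar R t I0 (Suc i))"
  shows "frob_proj p R t I0 i y \<in> carrier (Rbar R t I0 i)
    \<and> tbar R t I0 i (frob_proj p R t I0 i y) = frob (Rbar R t I0 (Suc i)) p y"
proof -
  have "frob (Rbar R t I0 (Suc i)) p y \<in> tbar R t I0 i ` carrier (Rbar R t I0 i)"
    using assms unfolding purely_insep_tower_def by blast
  then have "\<exists>!x. x \<in> carrier (Rbar R t I0 i) \<and> tbar R t I0 i x = frob (Rbar R t I0 (Suc i)) p y"
    using inj_onD[OF purely_insep_towerD(4)[OF assms(1)]] by blast
  then show ?thesis unfolding frob_proj_def by (rule theI')
qed

lemma frob_proj_ring_hom:
  assumes p: "Factorial_Ring.prime p" and tower: "purely_insep_tower p R t I0"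
  shows "frob_proj p R t I0 i \<in> ring_hom (Rbar R t I0 (Suc i)) (Rbar R t I0 i)"
proof -
  note facts = purely_insep_towerD[OF tower]
  interpret ring_hom_ring "Rbar R t I0 i" "Rbar R t I0 (Suc i)" "tbar R t I0 i"
    by (rule tbar_ring_hom_ring[OF facts(1,2)])
  have "frob (Rbar R t I0 (Suc i)) p \<in> ring_hom (Rbar R t I0 (Suc i)) (Rbar R t I0 (Suc i))"
    by (rule frob_ring_hom[OF Rbar_cring[OF facts(1,2)] p Rbar_char[OF facts(1-3)]])
  then show ?thesis
    by (rule ring_hom_factor_through_inj[OF R.ring_axioms S.ring_axioms homh facts(4) _
          frob_proj_spec[OF tower]])
qed

lemma frob_proj_tbar:
  assumes tower: "purely_insep_tower p R t I0" and x: "x \<in> carrier (Rbar R t I0 i)"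
  shows "frob_proj p R t I0 i (tbar R t I0 i x) = frob (Rbar R t I0 i) p x"
proof -
  note facts = purely_insep_towerD[OF tower]
  interpret ring_hom_ring "Rbar R t I0 i" "Rbar R t I0 (Suc i)" "tbar R t I0 i"
    by (rule tbar_ring_hom_ring[OF facts(1,2)])
  note spec = frob_proj_spec[OF tower hom_closed[OF x]]
  have "tbar R t I0 i (frob_proj p R t I0 i (tbar R t I0 i x))
      = tbar R t I0 i x [^]\<^bsub>Rbar R t I0 (Suc i)\<^esub> p"
    using spec unfolding frob_def by blast
  also have "\<dots> = tbar R t I0 i (x [^]\<^bsub>Rbar R t I0 i\<^esub> p)" by (rule hom_nat_pow[OF x, symmetric])
  finally show ?thesis
    unfolding frob_def by (rule inj_onD[OF facts(4) _ conjunct1[OF spec] R.nat_pow_closed[OF x]])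
qed

lemma frob_proj_reflects_nilrad:
  assumes tower: "purely_insep_tower p R t I0" and w: "w \<in> carrier (Rbar R t I0 (Suc i))"
    and nil: "frob_proj p R t I0 i w \<in> nilrad (Rbar R t I0 i)"
  shows "w \<in> nilrad (Rbar R t I0 (Suc i))"
proof -
  note facts = purely_insep_towerD[OF tower]
  interpret ring_hom_ring "Rbar R t I0 i" "Rbar R t I0 (Suc i)" "tbar R t I0 i"
    by (rule tbar_ring_hom_ring[OF facts(1,2)])
  obtain n where n: "frob_proj p R t I0 i w [^]\<^bsub>Rbar R t I0 i\<^esub> (n::nat) = \<zero>\<^bsub>Rbar R t I0 i\<^esub>"
    using nil unfolding nilrad_def by blast
  have "w [^]\<^bsub>Rbar R t I0 (Suc i)\<^esub> (p * n)
      = tbar R t I0 i (frob_proj p R t I0 i w [^]\<^bsub>Rbar R t I0 i\<^esub> n)"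
    using frob_proj_spec[OF tower w] w by (simp add: hom_nat_pow frob_def S.nat_pow_pow)
  also have "\<dots> = \<zero>\<^bsub>Rbar R t I0 (Suc i)\<^esub>" by (simp add: n)
  finally show ?thesis unfolding nilrad_def using w by blast
qed

theorem proposition3p4:
  fixes p :: nat and R :: "nat \<Rightarrow> 'a ring" and t :: "nat \<Rightarrow> 'a \<Rightarrow> 'a" and I0 :: "'a set"
  assumes "Factorial_Ring.prime p"
    and "purely_insep_tower p R t I0"
    and "\<forall>i. frob_proj p R t I0 i ` carrier (Rbar R t I0 (Suc i)) = carrier (Rbar R t I0 i)"
  shows "perfect_tower p (Rred R t I0) (tred R t I0)"
proof -
  note facts = purely_insep_towerD[OF assms(2)]
  note Rbar_ring = cring.axioms(1)[OF Rbar_cring[OF facts(1,2)]]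
  note nilrad = cring.nilrad_ideal[OF Rbar_cring[OF facts(1,2)]]
  note F_hom = frob_proj_ring_hom[OF assms(1,2)]
  note t_hom = tbar_ring_hom[OF facts(1,2)]
  show ?thesis
  proof (rule perfect_towerI)
    show "reduced_Fp_algebra p (Rred R t I0 0)"
      unfolding Rred_def by (rule red_reduced_Fp_algebra[OF Rbar_cring Rbar_char]) (fact facts)+
    show "ring (Rred R t I0 i)" for i
      unfolding Rred_def red_def by (rule ideal.quotient_is_ring[OF nilrad])
    show "quot_map (Rbar R t I0 i) (nilrad (Rbar R t I0 i)) (frob_proj p R t I0 i)
        \<in> ring_iso (Rred R t I0 (Suc i)) (Rred R t I0 i)" for i
      unfolding Rred_def red_def
      by (rule quot_map_ring_iso[OF Rbar_ring Rbar_ring nilrad nilrad F_hom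
            nilrad_ring_hom_image[OF Rbar_ring Rbar_ring F_hom]])
         (use assms(3) frob_proj_reflects_nilrad[OF assms(2)] in auto)
    show "quot_map (Rbar R t I0 i) (nilrad (Rbar R t I0 i)) (frob_proj p R t I0 i) (tred R t I0 i x)
        = frob (Rred R t I0 i) p x" if "x \<in> carrier (Rred R t I0 i)" for i x
      using that unfolding Rred_def red_def tred_def
      by (intro quot_map_comp_frob[OF Rbar_ring Rbar_ring nilrad nilrad t_hom
            nilrad_ring_hom_image[OF Rbar_ring Rbar_ring t_hom] F_hom
            nilrad_ring_hom_image[OF Rbar_ring Rbar_ring F_hom]])
         (simp_all add: frob_proj_tbar[OF assms(2)] frob_def)
  qed
qed

end
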